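(* Let $m\in\mathbb N$ and, for every $n\in\mathbb N$, let $\nu_n:[0,1)\to\mathbb R$ be measurable with respect to $\mathcal J^m$. Then for every $u\in\mathbb N_0$ the random variables $\big(\nu_n\circ\tau_B^{\,u+(n-1)m}\big)_{n\in\mathbb N}$ are mutually independent with respect to Lebesgue measure $\lambda$ on $[0,1)$.
   Context: Let $\tau(x)=2x\bmod1$ on $[0,1)$, $B=[1/2,1)$, $\phi(x)=\inf\{n\in\mathbb N_0:\tau^nx\in B\}+1$ and $\tau_Bx=\tau^{\phi(x)}x$ (defined $\lambda$-a.e.). For $m\in\mathbb N$, $j\in\mathbb N_0$ and $i\in\{0,\dots,2^{m-1}-1\}$ let $J^m_{j,i}=\big[2^{-j}-(i+1)2^{-(j+m)},\,2^{-j}-i\,2^{-(j+m)}\big)$; for fixed $m$ these intervals partition $(0,1)$, and $\mathcal J^m$ denotes the $\sigma$-algebra they generate. *)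

theory Defs
  imports "HOL-Probability.Probability"
begin

definition tau :: "real \<Rightarrow> real" where
  "tau x = frac (2 * x)"

definition Bset :: "real set" where
  "Bset = {1/2..<1}"

text \<open>First entry time (plus one) into B. On the null set of points that never enter B
  (x = 0 and dyadic rationals) the value is an arbitrary convention (here 0, so tau_B is the identity there).\<close>
definition phi :: "real \<Rightarrow> nat" where
  "phi x = (if \<exists>n. (tau ^^ n) x \<in> Bset then (LEAST n. (tau ^^ n) x \<in> Bset) + 1 else 0)"

definition tauB :: "real \<Rightarrow> real" where
  "tauB x = (tau ^^ phi x) x"

definition Jint :: "nat \<Rightarrow> nat \<Rightarrow> nat \<Rightarrow> real set" where
  "Jint m j i = {(1/2)^j - (real i + 1) * (1/2)^(j+m) ..< (1/2)^j - real i * (1/2)^(j+m)}"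

definition Jalg :: "nat \<Rightarrow> real measure" where
  "Jalg m = sigma {0..<1} {Jint m j i | j i. i < 2^(m-1)}"

definition lambda01 :: "real measure" where
  "lambda01 = restrict_space lborel {0..<1}"

end

theory Submission
  imports Defs
begin

text \<open>The induced map \<open>tauB\<close> preserves Lebesgue measure: it is \<open>x \<mapsto> 2x - 1\<close> on \<open>[1/2,1)\<close>
  and \<open>x \<mapsto> tauB (2x)\<close> on \<open>[0,1/2)\<close>. The same splitting shows, by induction on \<open>r\<close>, that a
  dyadic interval of length \<open>2^-r\<close> is independent of \<open>tauB^-k S\<close> whenever \<open>r \<le> k\<close>. Since
  \<open>tauB\<close> maps \<open>J^m_(j,i)\<close> affinely onto a dyadic interval of length \<open>2^(1-m)\<close>, each generator
  \<open>A\<close> of \<open>J^m\<close> satisfies \<open>\<lambda>(A \<inter> tauB^-m S) = \<lambda>(A) \<lambda>(S)\<close>; the generators are pairwise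
  disjoint, so this mixing property extends to all of \<open>J^m\<close> by Dynkin's \<open>\<pi>\<close>-\<open>\<lambda>\<close> theorem.
  Together with invariance it gives the product formula for the variables
  \<open>\<nu>_n \<circ> tauB^(u + (n-1)m)\<close> by peeling off the earliest factor.\<close>

section \<open>Iterates of a map that mixes a sub-\<open>\<sigma>\<close>-algebra\<close>

context prob_space
begin

lemma prob_funpow_vimage:
  assumes R: "R \<in> M \<rightarrow>\<^sub>M M"
    and preserving: "\<And>S. S \<in> events \<Longrightarrow> prob (R -` S \<inter> space M) = prob S"
    and S: "S \<in> events"
  shows "prob ((R ^^ k) -` S \<inter> space M) = prob S"
proof (induction k)
  case (Suc k)
  have "(R ^^ Suc k) -` S \<inter> space M = R -` ((R ^^ k) -` S \<inter> space M) \<inter> space M"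
    using measurable_space[OF R] by (auto simp del: funpow.simps simp: funpow_Suc_right)
  also have "prob \<dots> = prob ((R ^^ k) -` S \<inter> space M)"
    using measurable_sets[OF measurable_compose_n[OF R] S] by (rule preserving)
  also have "\<dots> = prob S"
    by (rule Suc.IH)
  finally show ?case .
qed (simp add: Int_absorb2 sets.sets_into_space[OF S])

lemma prob_Int_mult_sigma_sets:
  assumes G: "Int_stable G" "G \<subseteq> events" and E: "E \<in> events"
    and indep: "\<And>A. A \<in> G \<Longrightarrow> prob (A \<inter> E) = prob A * prob E"
    and A: "A \<in> sigma_sets (space M) G"
  shows "prob (A \<inter> E) = prob A * prob E"
proof -
  have "indep_set G {E}"
    using G E indep by (simp add: indep_sets2_eq)
  then have "indep_set (sigma_sets (space M) G) (sigma_sets (space M) {E})"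
    using G(1) by (rule indep_set_sigma_sets) (simp add: Int_stable_def)
  then show ?thesis
    using A by (simp add: indep_sets2_eq)
qed

lemma events_Collect_funpow:
  assumes R: "R \<in> M \<rightarrow>\<^sub>M M" and K: "finite K" "\<And>n. n \<in> K \<Longrightarrow> B n \<in> events"
  shows "{x \<in> space M. \<forall>n\<in>K. (R ^^ f n) x \<in> B n} \<in> events"
proof (rule sets.sets_Collect_finite_All[OF _ K(1)])
  fix n assume "n \<in> K"
  show "{x \<in> space M. (R ^^ f n) x \<in> B n} \<in> events"
    using pred_sets2[OF K(2)[OF \<open>n \<in> K\<close>] measurable_compose_n[OF R]] unfolding pred_def .
qed

lemma prob_Collect_funpow_lessThan_eq_prod:
  assumes R: "R \<in> M \<rightarrow>\<^sub>M M"
    and F: "sets F \<subseteq> events"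
    and mixing: "\<And>A S. A \<in> sets F \<Longrightarrow> S \<in> events \<Longrightarrow> prob (A \<inter> (R ^^ m) -` S) = prob A * prob S"
    and B: "\<And>n. n < N \<Longrightarrow> B n \<in> sets F"
  shows "prob {x \<in> space M. \<forall>n<N. (R ^^ (n * m)) x \<in> B n} = (\<Prod>n<N. prob (B n))"
  using B
proof (induction N arbitrary: B)
  case (Suc N)
  let ?C = "{x \<in> space M. \<forall>n<N. (R ^^ (n * m)) x \<in> B (Suc n)}"
  have "{x \<in> space M. \<forall>n\<in>{..<N}. (R ^^ (n * m)) x \<in> B (Suc n)} \<in> events"
    by (rule events_Collect_funpow[OF R finite_lessThan]) (use Suc.prems F in auto)
  then have C: "?C \<in> events"
    by (simp only: Ball_def lessThan_iff)
  have B0: "B 0 \<subseteq> space M"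
    using Suc.prems F sets.sets_into_space by blast
  have shift: "(R ^^ (m + n * m)) x = (R ^^ (n * m)) ((R ^^ m) x)" for n x
    by (simp add: add.commute[of m] funpow_add)
  have "{x \<in> space M. \<forall>n<Suc N. (R ^^ (n * m)) x \<in> B n} = B 0 \<inter> (R ^^ m) -` ?C"
    using B0 measurable_space[OF measurable_compose_n[OF R, of m]]
    by (auto simp: All_less_Suc2 shift simp del: funpow.simps)
  also have "prob \<dots> = prob (B 0) * (\<Prod>n<N. prob (B (Suc n)))"
    using mixing[OF _ C] Suc by simp
  finally show ?case by (simp only: prod.lessThan_Suc_shift)
qed (simp add: prob_space)

lemma prob_Collect_funpow_eq_prod:
  assumes R: "R \<in> M \<rightarrow>\<^sub>M M"
    and F: "sets F \<subseteq> events" "space F = space M"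
    and mixing: "\<And>A S. A \<in> sets F \<Longrightarrow> S \<in> events \<Longrightarrow> prob (A \<inter> (R ^^ m) -` S) = prob A * prob S"
    and K: "finite K" "\<And>n. n \<in> K \<Longrightarrow> B n \<in> sets F"
  shows "prob {x \<in> space M. \<forall>n\<in>K. (R ^^ (n * m)) x \<in> B n} = (\<Prod>n\<in>K. prob (B n))"
proof -
  obtain N where N: "K \<subseteq> {..<N}"
    using K(1) finite_nat_bounded by blast
  let ?B = "\<lambda>n. if n \<in> K then B n else space M"
  have "{x \<in> space M. \<forall>n\<in>K. (R ^^ (n * m)) x \<in> B n} = {x \<in> space M. \<forall>n<N. (R ^^ (n * m)) x \<in> ?B n}"
    using N measurable_space[OF measurable_compose_n[OF R]] by auto
  also have "prob \<dots> = (\<Prod>n<N. prob (?B n))"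
    using F K(2) by (intro prob_Collect_funpow_lessThan_eq_prod[OF R F(1) mixing])
      (auto intro: sets.top[of F, simplified F(2)])
  also have "\<dots> = (\<Prod>n\<in>{n\<in>{..<N}. n \<in> K}. prob (B n))"
    by (subst prod.inter_filter) (auto simp: prob_space intro!: prod.cong)
  also have "{n\<in>{..<N}. n \<in> K} = K"
    using N by blast
  finally show ?thesis .
qed

theorem indep_vars_funpow_mixing:
  assumes R: "R \<in> M \<rightarrow>\<^sub>M M"
    and preserving: "\<And>S. S \<in> events \<Longrightarrow> prob (R -` S \<inter> space M) = prob S"
    and F: "subalgebra M F"
    and mixing: "\<And>A S. A \<in> sets F \<Longrightarrow> S \<in> events \<Longrightarrow> prob (A \<inter> (R ^^ m) -` S) = prob A * prob S"
    and \<nu>: "\<And>i. i \<in> I \<Longrightarrow> \<nu> i \<in> borel_measurable F"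
    and k: "inj_on k I"
  shows "indep_vars (\<lambda>_. borel) (\<lambda>i x. \<nu> i ((R ^^ (u + k i * m)) x)) I"
proof -
  have F_sets: "sets F \<subseteq> events" and F_space: "space F = space M"
    using F by (auto simp: subalgebra_def)
  define X where "X i x = \<nu> i ((R ^^ (u + k i * m)) x)" for i x
  define C where "C i B = \<nu> i -` B \<inter> space M" for i B
  have C: "C i B \<in> sets F" if "i \<in> I" "B \<in> sets borel" for i B
    using measurable_sets[OF \<nu>[OF that(1)] that(2)] F_space by (simp add: C_def)
  have X_vimage: "X i -` B \<inter> space M = (R ^^ (u + k i * m)) -` C i B \<inter> space M" for i B
    using measurable_space[OF measurable_compose_n[OF R]] by (auto simp: X_def C_def)
  have prob_X_vimage: "prob (X i -` B \<inter> space M) = prob (C i B)" if "i \<in> I" "B \<in> sets borel" for i B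
    unfolding X_vimage using C[OF that] F_sets by (intro prob_funpow_vimage[OF R preserving]) auto
  have X: "random_variable borel (X i)" if "i \<in> I" for i
    unfolding X_def
    using measurable_compose[OF measurable_compose_n[OF R] measurable_from_subalg[OF F \<nu>[OF that]]]
    by (simp add: comp_def)
  show ?thesis
    unfolding indep_vars_def2 indep_sets_def X_def[symmetric]
  proof (intro conjI ballI allI impI)
    fix i assume "i \<in> I"
    show "random_variable borel (X i)"
      using X \<open>i \<in> I\<close> .
    show "{X i -` A \<inter> space M |A. A \<in> sets borel} \<subseteq> events"
      using measurable_sets[OF X[OF \<open>i \<in> I\<close>]] by blast
  next
    fix J A assume J: "J \<subseteq> I" "J \<noteq> {}" "finite J"
      and A: "A \<in> (\<Pi> i\<in>J. {X i -` B \<inter> space M |B. B \<in> sets borel})"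
    then have "\<forall>j\<in>J. \<exists>B. B \<in> sets borel \<and> A j = X j -` B \<inter> space M"
      by (auto simp: Pi_iff)
    then obtain B where B: "\<And>j. j \<in> J \<Longrightarrow> B j \<in> sets borel \<and> A j = X j -` B j \<inter> space M"
      by (auto dest!: bchoice)
    let ?D = "\<lambda>n. C (inv_into J k n) (B (inv_into J k n))"
    let ?E = "{y \<in> space M. \<forall>n\<in>k ` J. (R ^^ (n * m)) y \<in> ?D n}"
    have kJ: "inj_on k J"
      using k J(1) by (rule inj_on_subset)
    have D: "?D n \<in> sets F" if "n \<in> k ` J" for n
      using that J(1) B by (auto intro!: C simp: inv_into_f_f[OF kJ])
    have E: "?E \<in> events"
      by (rule events_Collect_funpow[OF R finite_imageI[OF J(3)]]) (use D F_sets in auto)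
    have shift: "(R ^^ (u + n)) x = (R ^^ n) ((R ^^ u) x)" for n x
      by (simp add: add.commute[of u] funpow_add)
    have "(\<Inter>j\<in>J. A j) = (R ^^ u) -` ?E \<inter> space M"
      using J(2) B measurable_space[OF measurable_compose_n[OF R]]
      by (auto simp: X_def C_def inv_into_f_f[OF kJ] shift)
    also have "prob \<dots> = prob ?E"
      by (rule prob_funpow_vimage[OF R preserving E])
    also have "\<dots> = (\<Prod>n\<in>k ` J. prob (?D n))"
      by (rule prob_Collect_funpow_eq_prod[OF R F_sets F_space mixing finite_imageI[OF J(3)] D])
    also have "\<dots> = (\<Prod>j\<in>J. prob (C j (B j)))"
      by (simp add: prod.reindex[OF kJ] inv_into_f_f[OF kJ])
    also have "\<dots> = (\<Prod>j\<in>J. prob (A j))"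
      using B J(1) by (intro prod.cong refl) (simp add: prob_X_vimage subset_iff)
    finally show "prob (\<Inter> (A ` J)) = (\<Prod>j\<in>J. prob (A j))" .
  qed
qed

end

section \<open>The induced map on its branches\<close>

lemma funpow_tau_eq:
  assumes "0 \<le> x" "2 ^ j * x < (1::real)" "n \<le> j"
  shows "(tau ^^ n) x = 2 ^ n * x"
  using assms(3)
proof (induction n)
  case (Suc n)
  have "(2::real) ^ Suc n * x \<le> 2 ^ j * x"
    using Suc.prems assms(1) by (intro mult_right_mono power_increasing) auto
  then have "2 ^ Suc n * x < 1"
    using assms(2) by linarith
  then show ?case
    using Suc assms(1) by (simp add: tau_def frac_eq mult.assoc)
qed simp

lemma tauB_branch:
  assumes "2 ^ Suc j * x - 1 \<in> {0..<1::real}"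
  shows "x \<in> {0..<1}" "tauB x = 2 ^ Suc j * x - 1"
proof -
  have lower: "1 \<le> 2 ^ Suc j * x" and upper: "2 ^ j * x < 1"
    using assms by auto
  then have "0 < 2 ^ Suc j * x"
    by linarith
  then have "0 < x"
    by (simp add: zero_less_mult_iff)
  moreover have "x \<le> 2 ^ j * x"
    using \<open>0 < x\<close> mult_right_mono[of 1 "2 ^ j" x] by simp
  ultimately have "0 \<le> x \<and> x < 1"
    using upper by linarith
  then show "x \<in> {0..<1}"
    by simp
  have tau_j: "(tau ^^ n) x = 2 ^ n * x" if "n \<le> j" for n
    using funpow_tau_eq[OF less_imp_le[OF \<open>0 < x\<close>] upper that] .
  have enter: "(tau ^^ j) x \<in> Bset"
    using lower upper by (simp add: tau_j Bset_def)
  have "(tau ^^ n) x \<notin> Bset" if "n < j" for n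
  proof -
    have "(2::real) ^ Suc n * x \<le> 2 ^ j * x"
      using that \<open>0 < x\<close> by (intro mult_right_mono power_increasing) auto
    then show ?thesis
      using upper that by (simp add: tau_j Bset_def)
  qed
  then have "(LEAST n. (tau ^^ n) x \<in> Bset) = j"
    using enter by (intro Least_equality) (auto simp: not_le[symmetric])
  then have "phi x = Suc j"
    using enter by (auto simp: phi_def)
  then have "tauB x = frac (2 ^ Suc j * x)"
    by (simp add: tauB_def tau_j tau_def mult.assoc)
  also have "\<dots> = 2 ^ Suc j * x - 1"
    using assms by (simp add: frac_def floor_eq_iff)
  finally show "tauB x = 2 ^ Suc j * x - 1" .
qed

lemma tauB_branch_exists:
  assumes "x \<in> {0<..<1::real}"
  obtains j where "2 ^ Suc j * x - 1 \<in> {0..<1}"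
proof -
  obtain n where "1 / x < 2 ^ n"
    using real_arch_pow[of 2 "1 / x"] by auto
  then have ex: "1 \<le> 2 ^ n * x"
    using assms by (simp add: field_simps)
  define k where "k = (LEAST n. 1 \<le> (2::real) ^ n * x)"
  have k: "1 \<le> 2 ^ k * x"
    unfolding k_def by (rule LeastI[of _ n]) (rule ex)
  then obtain j where j: "k = Suc j"
    using assms by (cases k) auto
  have "j < k"
    using j by simp
  then have "\<not> 1 \<le> 2 ^ j * x"
    unfolding k_def by (rule not_less_Least)
  then show thesis
    using k j by (intro that[of j]) auto
qed

lemma tauB_branch_unique:
  assumes "2 ^ Suc j * x - 1 \<in> {0..<1::real}" "2 ^ Suc j' * x - 1 \<in> {0..<1::real}"
  shows "j = j'"
proof -
  have "\<not> j < l" if "2 ^ Suc j * x - 1 \<in> {0..<1::real}" "2 ^ Suc l * x - 1 \<in> {0..<1::real}" for j l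
  proof
    assume "j < l"
    then have "(2::real) ^ Suc j * x \<le> 2 ^ l * x"
      using tauB_branch(1)[OF that(1)] by (intro mult_right_mono power_increasing) auto
    then show False
      using that by auto
  qed
  then show ?thesis
    using assms by (meson linorder_neqE_nat)
qed

lemma tauB_zero: "tauB 0 = 0"
proof -
  have "(tau ^^ n) 0 = 0" for n
    by (induction n) (auto simp: tau_def)
  then show ?thesis
    by (simp add: tauB_def phi_def Bset_def)
qed

lemma tauB_lower_half:
  assumes "x \<in> {0..<1/2::real}"
  shows "tauB x = tauB (2 * x)"
proof (cases "x = 0")
  case False
  then obtain j where j: "2 ^ Suc j * (2 * x) - 1 \<in> {0..<1}"
    using assms tauB_branch_exists[of "2 * x"] by auto
  moreover have "2 ^ Suc (Suc j) * x = 2 ^ Suc j * (2 * x)"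
    by simp
  ultimately show ?thesis
    using tauB_branch(2)[OF j] tauB_branch(2)[of "Suc j" x] by simp
qed simp

lemma tauB_upper_half: "x \<in> {1/2..<1::real} \<Longrightarrow> tauB x = 2 * x - 1"
  using tauB_branch(2)[of 0 x] by simp

lemma tauB_in_unit:
  assumes "x \<in> {0..<1::real}"
  shows "tauB x \<in> {0..<1}"
proof (cases "x = 0")
  case False
  then obtain j where "2 ^ Suc j * x - 1 \<in> {0..<1}"
    using assms tauB_branch_exists[of x] by auto
  then show ?thesis
    using tauB_branch(2) by simp
qed (simp add: tauB_zero)

lemma funpow_tauB_in_unit: "x \<in> {0..<1::real} \<Longrightarrow> (tauB ^^ k) x \<in> {0..<1}"
  by (induction k) (auto simp del: atLeastLessThan_iff intro: tauB_in_unit)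

section \<open>Invariance of Lebesgue measure\<close>

lemma space_lambda01 [simp]: "space lambda01 = {0..<1}"
  by (simp add: lambda01_def)

lemma sets_lambda01_iff: "A \<in> sets lambda01 \<longleftrightarrow> A \<subseteq> {0..<1} \<and> A \<in> sets borel"
  unfolding lambda01_def by (subst sets_restrict_space_iff) auto

lemma measure_lambda01: "A \<in> sets lambda01 \<Longrightarrow> measure lambda01 A = measure lborel A"
  unfolding lambda01_def by (rule measure_restrict_space) (auto simp: sets_lambda01_iff[unfolded lambda01_def])

lemma prob_space_lambda01: "prob_space lambda01"
proof
  show "emeasure lambda01 (space lambda01) = 1"
    unfolding lambda01_def by (subst emeasure_restrict_space) auto
qed

lemma measure_lborel_affine_vimage:
  fixes c d :: real
  assumes "S \<in> sets borel" "c > 0"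
  shows "measure lborel {x. c * x + d \<in> S} = measure lborel S / c"
proof -
  have "{x. c * x + d \<in> S} = (\<lambda>y. (1 / c) *\<^sub>R y + (- d / c)) ` S"
    using assms(2) by (auto simp: field_simps image_iff intro!: exI[of _ "c * _ + d"])
  moreover have "measure lebesgue ((\<lambda>y. (1 / c) *\<^sub>R y + (- d / c)) ` S)
      = \<bar>1 / c\<bar> ^ DIM(real) * measure lebesgue S"
    by (rule measure_lebesgue_affine)
  moreover have "(\<lambda>x. c * x + d) -` S \<in> sets borel"
    using assms(1) by (intro measurable_sets_borel) auto
  ultimately show ?thesis
    using assms by (simp add: vimage_def)
qed

lemma measure_lambda01_affine_vimage:
  fixes c d :: real
  assumes S: "S \<in> sets lambda01" and "c > 0" and unit: "{x. c * x + d \<in> S} \<subseteq> {0..<1}"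
  shows "measure lambda01 {x. c * x + d \<in> S} = measure lambda01 S / c"
proof -
  have "S \<in> sets borel"
    using S by (simp add: sets_lambda01_iff)
  moreover have "(\<lambda>x. c * x + d) -` S \<in> sets borel"
    using calculation by (intro measurable_sets_borel) auto
  ultimately have vimage: "{x. c * x + d \<in> S} \<in> sets lambda01"
    using unit by (simp add: sets_lambda01_iff vimage_def)
  show ?thesis
    using measure_lambda01[OF vimage] measure_lambda01[OF S]
      measure_lborel_affine_vimage[OF \<open>S \<in> sets borel\<close> \<open>c > 0\<close>] by simp
qed

lemma tauB_vimage_eq_Union:
  assumes "T \<subseteq> {0..<1}"
  shows "tauB -` T \<inter> {0..<1} = ({0} \<inter> T) \<union> (\<Union>j. {x. 2 ^ Suc j * x + - 1 \<in> T})"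
proof (intro set_eqI iffI)
  fix x assume x: "x \<in> tauB -` T \<inter> {0..<1}"
  show "x \<in> ({0} \<inter> T) \<union> (\<Union>j. {x. 2 ^ Suc j * x + - 1 \<in> T})"
  proof (cases "x = 0")
    case False
    then obtain j where "2 ^ Suc j * x - 1 \<in> {0..<1}"
      using x tauB_branch_exists[of x] by auto
    then show ?thesis
      using x tauB_branch(2) by auto
  qed (use x tauB_zero in auto)
next
  fix x assume "x \<in> ({0} \<inter> T) \<union> (\<Union>j. {x. 2 ^ Suc j * x + - 1 \<in> T})"
  then show "x \<in> tauB -` T \<inter> {0..<1}"
    using assms tauB_branch[of _ x] tauB_zero by auto
qed

lemma measurable_tauB: "tauB \<in> lambda01 \<rightarrow>\<^sub>M lambda01"
proof (rule measurableI)
  show "tauB x \<in> space lambda01" if "x \<in> space lambda01" for x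
    using that tauB_in_unit by simp
  fix T assume "T \<in> sets lambda01"
  then have T: "T \<subseteq> {0..<1}" "T \<in> sets borel"
    by (simp_all add: sets_lambda01_iff)
  have "(\<lambda>x. 2 ^ Suc j * x + - 1) -` T \<in> sets borel" for j
    using T(2) by (intro measurable_sets_borel) auto
  then have "tauB -` T \<inter> {0..<1} \<in> sets borel"
    unfolding tauB_vimage_eq_Union[OF T(1)]
    using T(2) by (intro sets.Un sets.countable_UN sets.Int) (auto simp: vimage_def)
  then show "tauB -` T \<inter> space lambda01 \<in> sets lambda01"
    by (simp add: sets_lambda01_iff)
qed

lemma measure_tauB_vimage:
  assumes S: "S \<in> sets lambda01"
  shows "measure lambda01 (tauB -` S \<inter> {0..<1}) = measure lambda01 S"
proof -
  interpret prob_space lambda01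
    by (rule prob_space_lambda01)
  define P where "P = tauB -` S \<inter> {0..<1}"
  have P: "P \<in> sets lambda01"
    using measurable_sets[OF measurable_tauB S] by (simp add: P_def)
  have upper: "P \<inter> {1/2..<1} = {x. 2 * x + - 1 \<in> S}"
    using S tauB_upper_half by (auto simp: P_def sets_lambda01_iff)
  have lower: "P \<inter> {0..<1/2} = {x. 2 * x + 0 \<in> P}"
    using tauB_lower_half by (auto simp: P_def)
  have "measure lambda01 P = measure lambda01 (P \<inter> {1/2..<1}) + measure lambda01 (P \<inter> {0..<1/2})"
    using P by (subst finite_measure_Union[symmetric])
      (auto simp: P_def sets_lambda01_iff intro!: arg_cong[where f="measure lambda01"])
  also have "\<dots> = measure lambda01 S / 2 + measure lambda01 P / 2"
  proof -
    have "measure lambda01 {x. 2 * x + - 1 \<in> S} = measure lambda01 S / 2"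
      by (rule measure_lambda01_affine_vimage[OF S]) (use upper in \<open>auto simp: P_def\<close>)
    moreover have "measure lambda01 {x. 2 * x + 0 \<in> P} = measure lambda01 P / 2"
      by (rule measure_lambda01_affine_vimage[OF P]) (use lower in \<open>auto simp: P_def\<close>)
    ultimately show ?thesis
      unfolding upper lower by simp
  qed
  finally show ?thesis
    by (simp add: P_def)
qed

lemma sets_lambda01_Int_funpow_vimage:
  assumes "A \<in> sets lambda01" "S \<in> sets lambda01"
  shows "A \<inter> (tauB ^^ k) -` S \<in> sets lambda01"
proof -
  have "A \<inter> (tauB ^^ k) -` S = A \<inter> ((tauB ^^ k) -` S \<inter> space lambda01)"
    using sets.sets_into_space[OF assms(1)] by auto
  then show ?thesis
    using assms measurable_sets[OF measurable_compose_n[OF measurable_tauB]] by auto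
qed

lemma measure_funpow_tauB_vimage:
  "S \<in> sets lambda01 \<Longrightarrow> measure lambda01 ((tauB ^^ k) -` S \<inter> {0..<1}) = measure lambda01 S"
  using prob_space.prob_funpow_vimage[OF prob_space_lambda01 measurable_tauB] measure_tauB_vimage
  by simp

section \<open>Dyadic intervals\<close>

definition dyadic_interval :: "nat \<Rightarrow> nat \<Rightarrow> real set" where
  "dyadic_interval r a = {a / 2 ^ r ..< (a + 1) / 2 ^ r}"

lemma mem_dyadic_interval_Suc: "x \<in> dyadic_interval (Suc r) a \<longleftrightarrow> 2 * x \<in> dyadic_interval r a"
  by (auto simp: dyadic_interval_def field_simps)

lemma mem_dyadic_interval_Suc_upper:
  assumes "2 ^ r \<le> a"
  shows "x \<in> dyadic_interval (Suc r) a \<longleftrightarrow> 2 * x - 1 \<in> dyadic_interval r (a - 2 ^ r)"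
  using assms by (auto simp: dyadic_interval_def field_simps)

lemma dyadic_interval_subset_unit:
  assumes "a < 2 ^ r"
  shows "dyadic_interval r a \<subseteq> {0..<1}"
proof -
  have "real a + 1 \<le> 2 ^ r"
    using assms by (metis Suc_leI of_nat_Suc of_nat_le_iff of_nat_numeral of_nat_power add.commute)
  then show ?thesis
    by (auto simp: dyadic_interval_def field_simps)
qed

lemma dyadic_interval_sets:
  "a < 2 ^ r \<Longrightarrow> dyadic_interval r a \<in> sets lambda01"
  using dyadic_interval_subset_unit by (simp add: sets_lambda01_iff dyadic_interval_def)

lemma dyadic_interval_unique:
  assumes "x \<in> dyadic_interval r a" "x \<in> dyadic_interval r b"
  shows "a = b"
proof -
  have "real a < real b + 1" "real b < real a + 1"
    using assms by (auto simp: dyadic_interval_def divide_strict_right_mono_neg field_simps)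
  then show ?thesis
    by linarith
qed

lemma measure_dyadic_interval_Int_funpow_vimage:
  assumes "a < 2 ^ r" "r \<le> k" and S: "S \<in> sets lambda01"
  shows "measure lambda01 (dyadic_interval r a \<inter> (tauB ^^ k) -` S) = measure lambda01 S / 2 ^ r"
  using assms(1,2)
proof (induction r arbitrary: a k)
  case 0
  then have "dyadic_interval 0 a \<inter> (tauB ^^ k) -` S = (tauB ^^ k) -` S \<inter> {0..<1}"
    by (auto simp: dyadic_interval_def)
  then show ?case
    using measure_funpow_tauB_vimage[OF S] by simp
next
  case (Suc r)
  then obtain k' where k: "k = Suc k'" and "r \<le> k'"
    by (cases k) auto
  define T where "T = (tauB ^^ k') -` S"
  have vimage_Suc: "(tauB ^^ k) -` S = tauB -` T"
    by (simp add: k T_def funpow_Suc_right vimage_comp del: funpow.simps)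
  show ?case
  proof (cases "2 ^ r \<le> a")
    case True
    define a' where "a' = a - 2 ^ r"
    have "a' < 2 ^ r"
      using True Suc.prems by (simp add: a'_def)
    have mem_iff: "x \<in> dyadic_interval (Suc r) a \<longleftrightarrow> 2 * x + - 1 \<in> dyadic_interval r a'" for x
      using mem_dyadic_interval_Suc_upper[OF True] by (simp add: a'_def)
    have "dyadic_interval (Suc r) a \<inter> (tauB ^^ k) -` S = {x. 2 * x + - 1 \<in> dyadic_interval r a' \<inter> T}"
      using dyadic_interval_subset_unit[OF \<open>a' < 2 ^ r\<close>] tauB_branch(2)[of 0]
      by (auto simp: vimage_Suc mem_iff)
    moreover have "measure lambda01 {x. 2 * x + - 1 \<in> dyadic_interval r a' \<inter> T}
        = measure lambda01 (dyadic_interval r a' \<inter> T) / 2"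
      unfolding T_def using dyadic_interval_subset_unit[OF \<open>a' < 2 ^ r\<close>]
      by (intro measure_lambda01_affine_vimage sets_lambda01_Int_funpow_vimage[OF dyadic_interval_sets S]
            \<open>a' < 2 ^ r\<close>) auto
    moreover have "measure lambda01 (dyadic_interval r a' \<inter> T) = measure lambda01 S / 2 ^ r"
      unfolding T_def by (rule Suc.IH) fact+
    ultimately show ?thesis
      by simp
  next
    case False
    then have "a < 2 ^ r"
      by simp
    have "dyadic_interval (Suc r) a \<inter> (tauB ^^ k) -` S = {x. 2 * x + 0 \<in> dyadic_interval r a \<inter> (tauB ^^ k) -` S}"
      using dyadic_interval_subset_unit[OF \<open>a < 2 ^ r\<close>] tauB_lower_half
      by (auto simp: vimage_Suc mem_dyadic_interval_Suc)
    moreover have "measure lambda01 {x. 2 * x + 0 \<in> dyadic_interval r a \<inter> (tauB ^^ k) -` S}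
        = measure lambda01 (dyadic_interval r a \<inter> (tauB ^^ k) -` S) / 2"
      using dyadic_interval_subset_unit[OF \<open>a < 2 ^ r\<close>]
      by (intro measure_lambda01_affine_vimage sets_lambda01_Int_funpow_vimage[OF dyadic_interval_sets S]
            \<open>a < 2 ^ r\<close>) auto
    moreover have "measure lambda01 (dyadic_interval r a \<inter> (tauB ^^ k) -` S) = measure lambda01 S / 2 ^ r"
      using Suc.IH[OF \<open>a < 2 ^ r\<close>] Suc.prems by simp
    ultimately show ?thesis
      by simp
  qed
qed

section \<open>The intervals \<open>Jint\<close> and the \<open>\<sigma>\<close>-algebra \<open>Jalg\<close>\<close>

lemma Jint_eq_affine_vimage:
  assumes "i < 2 ^ m"
  shows "Jint (Suc m) j i = {x. 2 ^ Suc j * x + - 1 \<in> dyadic_interval m (2 ^ m - Suc i)}"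
proof -
  define p :: real where "p = 2 ^ j"
  define q :: real where "q = 2 ^ m"
  have "p > 0" "q > 0"
    by (simp_all add: p_def q_def)
  have a: "real (2 ^ m - Suc i) = q - real i - 1"
    using assms by (simp add: q_def)
  have powers: "(1/2::real) ^ j = 1 / p" "(1/2::real) ^ (j + Suc m) = 1 / (p * 2 * q)" "(2::real) ^ Suc j = 2 * p"
    by (simp_all add: p_def q_def power_add power_one_over)
  show ?thesis
  proof (intro set_eqI)
    fix x :: real
    have left: "1 / p - (real i + 1) * (1 / (p * 2 * q)) \<le> x \<longleftrightarrow> (q - real i - 1) / q \<le> 2 * p * x + - 1"
      using \<open>p > 0\<close> \<open>q > 0\<close> by (simp add: field_simps)
    have right: "x < 1 / p - real i * (1 / (p * 2 * q)) \<longleftrightarrow> 2 * p * x + - 1 < (q - real i - 1 + 1) / q"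
      using \<open>p > 0\<close> \<open>q > 0\<close> by (simp add: field_simps)
    show "x \<in> Jint (Suc m) j i \<longleftrightarrow> x \<in> {x. 2 ^ Suc j * x + - 1 \<in> dyadic_interval m (2 ^ m - Suc i)}"
      unfolding Jint_def dyadic_interval_def a powers mem_Collect_eq atLeastLessThan_iff left right
      by (simp add: q_def)
  qed
qed

lemma Jint_subset_unit:
  assumes "i < 2 ^ m"
  shows "Jint (Suc m) j i \<subseteq> {0..<1}"
proof
  fix x assume "x \<in> Jint (Suc m) j i"
  then have "2 ^ Suc j * x - 1 \<in> {0..<1}"
    using assms dyadic_interval_subset_unit[of "2 ^ m - Suc i" m] by (auto simp: Jint_eq_affine_vimage)
  then show "x \<in> {0..<1}"
    by (rule tauB_branch(1))
qed

lemma Jint_sets: "i < 2 ^ m \<Longrightarrow> Jint (Suc m) j i \<in> sets lambda01"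
  using Jint_subset_unit by (simp add: sets_lambda01_iff Jint_def)

lemma measure_Jint_Int_funpow_vimage:
  assumes i: "i < 2 ^ m" and S: "S \<in> sets lambda01"
  shows "measure lambda01 (Jint (Suc m) j i \<inter> (tauB ^^ Suc m) -` S) = measure lambda01 S / (2 ^ m * 2 ^ Suc j)"
proof -
  define D where "D = dyadic_interval m (2 ^ m - Suc i)"
  have "2 ^ m - Suc i < 2 ^ m"
    using i by simp
  note D = dyadic_interval_subset_unit[OF this, folded D_def] dyadic_interval_sets[OF this, folded D_def]
  have "Jint (Suc m) j i \<inter> (tauB ^^ Suc m) -` S = {x. 2 ^ Suc j * x + - 1 \<in> D \<inter> (tauB ^^ m) -` S}"
    using D(1) tauB_branch(2)[of j]
    by (auto simp: Jint_eq_affine_vimage[OF i] D_def[symmetric] funpow_Suc_right simp del: funpow.simps)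
  also have "measure lambda01 \<dots> = measure lambda01 (D \<inter> (tauB ^^ m) -` S) / 2 ^ Suc j"
    using D(1) tauB_branch(1)[of j]
    by (intro measure_lambda01_affine_vimage sets_lambda01_Int_funpow_vimage[OF D(2) S]) auto
  also have "\<dots> = measure lambda01 S / (2 ^ m * 2 ^ Suc j)"
    unfolding D_def using i S by (subst measure_dyadic_interval_Int_funpow_vimage) auto
  finally show ?thesis .
qed

lemma measure_Jint_Int_funpow_vimage_mult:
  assumes i: "i < 2 ^ m" and S: "S \<in> sets lambda01"
  shows "measure lambda01 (Jint (Suc m) j i \<inter> (tauB ^^ Suc m) -` S)
    = measure lambda01 (Jint (Suc m) j i) * measure lambda01 S"
proof -
  have "Jint (Suc m) j i = Jint (Suc m) j i \<inter> (tauB ^^ Suc m) -` {0..<1}"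
    using Jint_subset_unit[OF i] funpow_tauB_in_unit by blast
  also have "measure lambda01 \<dots> = measure lambda01 {0..<1} / (2 ^ m * 2 ^ Suc j)"
    by (rule measure_Jint_Int_funpow_vimage[OF i]) (simp add: sets_lambda01_iff)
  also have "measure lambda01 {0..<1} = 1"
    using prob_space.prob_space[OF prob_space_lambda01] by simp
  finally show ?thesis
    using measure_Jint_Int_funpow_vimage[OF assms] by simp
qed

lemma Jint_unique:
  assumes "i < 2 ^ m" "i' < 2 ^ m" "x \<in> Jint (Suc m) j i" "x \<in> Jint (Suc m) j' i'"
  shows "j = j'" "i = i'"
proof -
  have x: "2 ^ Suc j * x + - 1 \<in> dyadic_interval m (2 ^ m - Suc i)"
       "2 ^ Suc j' * x + - 1 \<in> dyadic_interval m (2 ^ m - Suc i')"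
    using assms(3,4) unfolding Jint_eq_affine_vimage[OF assms(1)] Jint_eq_affine_vimage[OF assms(2)] by auto
  have a: "2 ^ m - Suc i < 2 ^ m" "2 ^ m - Suc i' < 2 ^ m"
    using assms(1,2) by auto
  have "2 ^ Suc j * x - 1 \<in> {0..<1}" "2 ^ Suc j' * x - 1 \<in> {0..<1}"
    using subsetD[OF dyadic_interval_subset_unit[OF a(1)] x(1)]
      subsetD[OF dyadic_interval_subset_unit[OF a(2)] x(2)] by simp_all
  then show "j = j'"
    by (rule tauB_branch_unique)
  then have "2 ^ m - Suc i = 2 ^ m - Suc i'"
    using x by (intro dyadic_interval_unique) auto
  then show "i = i'"
    using assms(1,2) by simp
qed

definition Jint_family :: "nat \<Rightarrow> real set set" where
  "Jint_family m = {Jint (Suc m) j i | j i. i < 2 ^ m}"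

lemma Jint_family_subset_lambda01: "Jint_family m \<subseteq> sets lambda01"
  using Jint_sets by (auto simp: Jint_family_def)

lemma Int_stable_Jint_family: "Int_stable (insert {} (Jint_family m))"
proof (rule Int_stableI)
  fix A B assume family: "A \<in> insert {} (Jint_family m)" "B \<in> insert {} (Jint_family m)"
  show "A \<inter> B \<in> insert {} (Jint_family m)"
  proof (cases "A \<inter> B = {}")
    case False
    then obtain x where "x \<in> A" "x \<in> B"
      by blast
    moreover obtain j i j' i' where "A = Jint (Suc m) j i" "i < 2 ^ m" "B = Jint (Suc m) j' i'" "i' < 2 ^ m"
      using family False by (auto simp: Jint_family_def)
    ultimately show ?thesis
      using Jint_unique[of i m i' x j j'] family by simp
  qed simp
qed

lemma Jalg_eq_sigma: "Jalg (Suc m) = sigma {0..<1} (Jint_family m)"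
  by (simp add: Jalg_def Jint_family_def)

lemma Jint_family_subset_Pow: "Jint_family m \<subseteq> Pow {0..<1}"
  using Jint_subset_unit by (auto simp: Jint_family_def)

lemma sets_Jalg: "sets (Jalg (Suc m)) = sigma_sets {0..<1} (Jint_family m)"
  by (simp add: Jalg_eq_sigma sets_measure_of[OF Jint_family_subset_Pow])

lemma space_Jalg: "space (Jalg (Suc m)) = {0..<1}"
  by (simp add: Jalg_eq_sigma space_measure_of[OF Jint_family_subset_Pow])

lemma subalgebra_Jalg: "subalgebra lambda01 (Jalg (Suc m))"
  unfolding subalgebra_def sets_Jalg space_Jalg
  using sets.sigma_sets_subset[OF Jint_family_subset_lambda01] by simp

lemma measure_Jalg_Int_funpow_vimage_mult:
  assumes A: "A \<in> sets (Jalg (Suc m))" and S: "S \<in> sets lambda01"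
  shows "measure lambda01 (A \<inter> (tauB ^^ Suc m) -` S) = measure lambda01 A * measure lambda01 S"
proof -
  interpret prob_space lambda01
    by (rule prob_space_lambda01)
  define E where "E = (tauB ^^ Suc m) -` S \<inter> {0..<1}"
  have E: "E \<in> events"
    using measurable_sets[OF measurable_compose_n[OF measurable_tauB] S] by (simp add: E_def del: funpow.simps)
  have prob_E: "prob E = prob S"
    using measure_funpow_tauB_vimage[OF S] by (simp add: E_def del: funpow.simps)
  have Int_E: "B \<inter> E = B \<inter> (tauB ^^ Suc m) -` S" if "B \<subseteq> {0..<1}" for B
    using that by (auto simp: E_def)
  have "prob (A \<inter> E) = prob A * prob E"
  proof (rule prob_Int_mult_sigma_sets[OF Int_stable_Jint_family _ E])
    show "insert {} (Jint_family m) \<subseteq> events"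
      using Jint_family_subset_lambda01 by simp
    show "A \<in> sigma_sets (space lambda01) (insert {} (Jint_family m))"
      using A sigma_sets_subseteq[OF subset_insertI] by (auto simp: sets_Jalg)
    fix B assume "B \<in> insert {} (Jint_family m)"
    then show "prob (B \<inter> E) = prob B * prob E"
      using Jint_subset_unit measure_Jint_Int_funpow_vimage_mult[OF _ S]
      by (auto simp: Jint_family_def Int_E prob_E simp del: funpow.simps)
  qed
  moreover have "A \<subseteq> {0..<1}"
    using sets.sets_into_space[OF A] by (simp add: space_Jalg)
  ultimately show ?thesis
    by (simp add: Int_E prob_E)
qed

theorem mainTheorem9:
  fixes m :: nat and u :: nat and \<nu> :: "nat \<Rightarrow> real \<Rightarrow> real"
  assumes "m \<ge> 1"
    and "\<And>n. n \<ge> 1 \<Longrightarrow> \<nu> n \<in> borel_measurable (Jalg m)"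
  shows "prob_space.indep_vars lambda01 (\<lambda>_. borel)
           (\<lambda>n x. \<nu> n ((tauB ^^ (u + (n - 1) * m)) x)) {1..}"
proof -
  obtain m' where m: "m = Suc m'"
    using assms(1) by (cases m) auto
  have preserving: "measure lambda01 (tauB -` S \<inter> space lambda01) = measure lambda01 S"
    if "S \<in> sets lambda01" for S
    using measure_tauB_vimage[OF that] by simp
  have "inj_on (\<lambda>n. n - 1) {1::nat..}"
    by (auto simp: inj_on_def)
  then show ?thesis
    using assms(2) measure_Jalg_Int_funpow_vimage_mult
    unfolding m
    by (intro prob_space.indep_vars_funpow_mixing[OF prob_space_lambda01 measurable_tauB preserving
          subalgebra_Jalg, where k="\<lambda>n. n - 1"]) auto
qed

end
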